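(* Let $r\in\mathbb N$ and let $(g_n)_{n\in\mathbb N}$ be a sequence in $\mathcal L_r$ whose supports are all contained in a common well-ordered set $W\subseteq\mathbb R_{\ge0}\times\mathbb Z^r$ with $\min W>\mathbf 0_{r+1}$, and let $g_0\in\mathcal L_r$. Let $\varphi\in\mathcal L_r^0$. Then $g_n\to g_0$ as $n\to\infty$ in the weak topology of $\mathcal L_r$ if and only if $g_n\circ\varphi\to g_0\circ\varphi$ as $n\to\infty$ in the weak topology of $\mathcal L_r$.
   Context: $z$ infinitesimal; $\boldsymbol\ell_1:=-1/\ln z$, $\boldsymbol\ell_{j+1}:=\boldsymbol\ell_j\circ\boldsymbol\ell_1$. $\mathcal L_r$: formal sums $\sum a_{\alpha,n_1,\dots,n_r}z^\alpha\boldsymbol\ell_1^{n_1}\cdots\boldsymbol\ell_r^{n_r}$, real coefficients, well-ordered support in $\mathbb R_{\ge0}\times\mathbb Z^r$ (lexicographic order). $\mathcal L_r^0$: elements with leading term $z$ (a group under composition of transseries). Weak topology: $(\varphi_n)\to\varphi$ iff for each $(\alpha,n_1,\dots,n_r)$ the coefficient of $z^\alpha\boldsymbol\ell_1^{n_1}\cdots\boldsymbol\ell_r^{n_r}$ in $\varphi_n$ converges in $\mathbb R$ to the corresponding coefficient of $\varphi$. *)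

theory Defs
  imports Complex_Main "HOL-Library.Product_Lexorder" "HOL-Library.List_Lexorder"
begin

text \<open>Exponents (alpha, [n_1,...,n_r]) of monomials z^alpha l_1^n_1 ... l_r^n_r,
  ordered lexicographically (Product_Lexorder / List_Lexorder).  Intermediate objects (derivatives) may
  have negative real exponents, so the carrier type is all of R x Z^r.\<close>

type_synonym expo = "real \<times> int list"
type_synonym tser = "expo \<Rightarrow> real"

definition supp :: "tser \<Rightarrow> expo set" where
  "supp f = {e. f e \<noteq> 0}"

definition well_ordered :: "'a::linorder set \<Rightarrow> bool" where
  "well_ordered S \<longleftrightarrow> (\<forall>A\<subseteq>S. A \<noteq> {} \<longrightarrow> (\<exists>m\<in>A. \<forall>x\<in>A. m \<le> x))"

definition expos :: "nat \<Rightarrow> expo set" where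
  "expos r = {(a, ns). 0 \<le> a \<and> length ns = r}"

definition Lr :: "nat \<Rightarrow> tser set" where
  "Lr r = {f. well_ordered (supp f) \<and> supp f \<subseteq> expos r}"

definition expo_add :: "expo \<Rightarrow> expo \<Rightarrow> expo" where
  "expo_add e1 e2 = (fst e1 + fst e2, map2 (+) (snd e1) (snd e2))"

text \<open>Cauchy product of formal sums (finite sums for well-ordered supports).\<close>
definition tmult :: "tser \<Rightarrow> tser \<Rightarrow> tser" where
  "tmult f g = (\<lambda>e. \<Sum>(e1, e2) \<in> {(e1, e2). e1 \<in> supp f \<and> e2 \<in> supp g \<and> expo_add e1 e2 = e}.
                     f e1 * g e2)"

definition tmonom :: "nat \<Rightarrow> real \<Rightarrow> tser" where
  "tmonom r a = (\<lambda>e. if e = (a, replicate r 0) then 1 else 0)"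

definition tpow :: "nat \<Rightarrow> tser \<Rightarrow> nat \<Rightarrow> tser" where
  "tpow r f k = (tmult f ^^ k) (tmonom r 0)"

text \<open>Formal derivative d/dz, term by term, using
  d/dz (z^a l^n) = z^(a-1) l^n (a + sum_j n_j l_1 ... l_j),
  which follows from l_1' = l_1^2/z and l_(j+1) = -1/ln l_j.
  Position j (0-based) of the list corresponds to l_(j+1);
  ones_upto j len is the exponent vector of l_1 ... l_(j+1).\<close>
definition ones_upto :: "nat \<Rightarrow> nat \<Rightarrow> int list" where
  "ones_upto j len = map (\<lambda>i. if i \<le> j then 1 else 0) [0..<len]"

definition tderiv :: "tser \<Rightarrow> tser" where
  "tderiv g = (\<lambda>(b, m). (b + 1) * g (b + 1, m)
      + (\<Sum>j<length m. (of_int (m ! j) - 1) * g (b + 1, map2 (-) m (ones_upto j (length m)))))"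

text \<open>Composition g o phi for phi = z + eps with eps of order < z, via the
  (formal) Taylor expansion g(z + eps) = sum_k g^(k)(z) eps^k / k!; for each
  exponent only finitely many k contribute.\<close>
definition tcomp :: "nat \<Rightarrow> tser \<Rightarrow> tser \<Rightarrow> tser" where
  "tcomp r g \<phi> =
     (let \<epsilon> = (\<lambda>e. \<phi> e - tmonom r 1 e)
      in (\<lambda>e. (\<Sum>k. tmult ((tderiv ^^ k) g) (tpow r \<epsilon> k) e / fact k)))"

definition Lr0 :: "nat \<Rightarrow> tser set" where
  "Lr0 r = {\<phi> \<in> Lr r. \<phi> (1, replicate r 0) = 1 \<and> (\<forall>e\<in>supp \<phi>. (1, replicate r 0) \<le> e)}"

definition weak_conv :: "(nat \<Rightarrow> tser) \<Rightarrow> tser \<Rightarrow> bool" where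
  "weak_conv g g0 \<longleftrightarrow> (\<forall>e. (\<lambda>n. g n e) \<longlonglongrightarrow> g0 e)"

end

theory Submission
  imports Defs "HOL-Library.Multiset"
begin

text \<open>
  Write \<open>\<phi> = z + \<epsilon>\<close>, so that \<open>g \<circ> \<phi>\<close> is the sum over \<open>k\<close> of \<open>g\<^sup>(\<^sup>k\<^sup>) \<epsilon>\<^sup>k / k!\<close>. Each
  derivative shifts exponents by at least \<open>(-1, 0, \<dots>, 0)\<close> and each exponent of \<open>\<epsilon>\<close>
  exceeds \<open>(1, 0, \<dots>, 0)\<close>, so every exponent of the \<open>k\<close>-th term has the form
  \<open>u + p\<^sub>1 + \<dots> + p\<^sub>k\<close> with \<open>u\<close> in the support of \<open>g\<close> and the \<open>p\<^sub>i\<close> positive elements of a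
  fixed well-ordered set. By a Neumann-type counting argument a given exponent \<open>e\<close> has
  such representations only for boundedly many \<open>k\<close>, so the coefficient of \<open>z\<^sup>e\<close> in
  \<open>g \<circ> \<phi>\<close> is a finite linear combination of coefficients \<open>g\<^sub>v\<close> with \<open>v \<le> e\<close>, in which \<open>g\<^sub>e\<close>
  has coefficient 1. A unitriangular map of this kind preserves coefficientwise
  convergence by linearity, and reflects it: at the least exponent where \<open>g\<^sub>n\<close> fails to
  converge, all other coefficients involved converge, hence so would \<open>g\<^sub>n\<close>.
\<close>

section \<open>Well-ordered sets\<close>

lemma well_ordered_subset: "well_ordered B \<Longrightarrow> A \<subseteq> B \<Longrightarrow> well_ordered A"
  unfolding well_ordered_def by (meson subset_trans)

lemma well_ordered_has_min: "well_ordered S \<Longrightarrow> A \<subseteq> S \<Longrightarrow> A \<noteq> {} \<Longrightarrow> \<exists>m\<in>A. \<forall>x\<in>A. m \<le> x"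
  unfolding well_ordered_def by simp

lemma finite_imp_well_ordered: "finite A \<Longrightarrow> well_ordered A"
  unfolding well_ordered_def
proof (intro allI impI)
  fix B assume "finite A" "B \<subseteq> A" "B \<noteq> {}"
  then have "finite B" using finite_subset by blast
  then show "\<exists>m\<in>B. \<forall>x\<in>B. m \<le> x"
    using \<open>B \<noteq> {}\<close> by (intro bexI[of _ "Min B"]) auto
qed

lemma well_ordered_Un:
  assumes A: "well_ordered A" and B: "well_ordered B"
  shows "well_ordered (A \<union> B)"
  unfolding well_ordered_def
proof (intro allI impI)
  fix C assume C: "C \<subseteq> A \<union> B" "C \<noteq> {}"
  show "\<exists>m\<in>C. \<forall>x\<in>C. m \<le> x"
  proof (cases "C \<inter> A = {} \<or> C \<inter> B = {}")
    case True
    then have "C \<subseteq> A \<or> C \<subseteq> B" using C(1) by blast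
    then show ?thesis using A B C(2) unfolding well_ordered_def by blast
  next
    case False
    obtain a where a: "a \<in> C \<inter> A" "\<forall>x\<in>C \<inter> A. a \<le> x"
      using well_ordered_has_min[OF A, of "C \<inter> A"] False by blast
    obtain b where b: "b \<in> C \<inter> B" "\<forall>x\<in>C \<inter> B. b \<le> x"
      using well_ordered_has_min[OF B, of "C \<inter> B"] False by blast
    show ?thesis
    proof (intro bexI[of _ "min a b"] ballI)
      fix x assume "x \<in> C"
      then show "min a b \<le> x" using a(2) b(2) C(1) by (auto simp: min_le_iff_disj)
    qed (use a b in \<open>simp add: min_def\<close>)
  qed
qed

lemma well_ordered_Union:
  "finite F \<Longrightarrow> (\<And>A. A \<in> F \<Longrightarrow> well_ordered A) \<Longrightarrow> well_ordered (\<Union>F)"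
  by (induction F rule: finite_induct) (auto simp: finite_imp_well_ordered well_ordered_Un)

lemma well_ordered_image_mono:
  assumes "well_ordered A" "\<And>x y. x \<in> A \<Longrightarrow> y \<in> A \<Longrightarrow> x \<le> y \<Longrightarrow> f x \<le> f y"
  shows "well_ordered (f ` A)"
  unfolding well_ordered_def
proof (intro allI impI)
  fix B assume B: "B \<subseteq> f ` A" "B \<noteq> {}"
  then obtain m where m: "m \<in> {x\<in>A. f x \<in> B}" "\<forall>x\<in>{x\<in>A. f x \<in> B}. m \<le> x"
    using well_ordered_has_min[OF assms(1), of "{x\<in>A. f x \<in> B}"] by blast
  show "\<exists>m\<in>B. \<forall>x\<in>B. m \<le> x"
  proof (intro bexI[of _ "f m"] ballI)
    fix y assume "y \<in> B"
    with B(1) obtain x where "x \<in> A" "y = f x" by blast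
    then show "f m \<le> y" using m \<open>y \<in> B\<close> assms(2) by auto
  qed (use m in simp)
qed

lemma well_ordered_iff_wf: "well_ordered S \<longleftrightarrow> wf {(x, y). x \<in> S \<and> y \<in> S \<and> x < y}"
  (is "_ \<longleftrightarrow> wf ?R")
proof
  assume wo: "well_ordered S"
  show "wf ?R"
  proof (unfold wf_eq_minimal, intro allI impI)
    fix Q and x :: 'a assume "x \<in> Q"
    show "\<exists>z\<in>Q. \<forall>y. (y, z) \<in> ?R \<longrightarrow> y \<notin> Q"
    proof (cases "Q \<inter> S = {}")
      case False
      then obtain m where "m \<in> Q \<inter> S" "\<forall>y\<in>Q \<inter> S. m \<le> y"
        using well_ordered_has_min[OF wo, of "Q \<inter> S"] by blast
      then show ?thesis by (intro bexI[of _ m]) (auto simp: not_less[symmetric])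
    qed (use \<open>x \<in> Q\<close> in auto)
  qed
next
  assume wf: "wf ?R"
  show "well_ordered S"
  proof (unfold well_ordered_def, intro allI impI)
    fix A assume A: "A \<subseteq> S" "A \<noteq> {}"
    then obtain a where "a \<in> A" by blast
    then obtain m where "m \<in> A" "\<forall>y. (y, m) \<in> ?R \<longrightarrow> y \<notin> A"
      using wf_eq_minimal[THEN iffD1, OF wf, rule_format, of a A] by blast
    then show "\<exists>m\<in>A. \<forall>x\<in>A. m \<le> x"
      using A(1) by (intro bexI[of _ m]) (auto simp: not_less[symmetric])
  qed
qed

lemma well_ordered_iff_no_descending_chain:
  "well_ordered S \<longleftrightarrow> (\<nexists>f. \<forall>i. f i \<in> S \<and> f (Suc i) < f i)"
  unfolding well_ordered_iff_wf wf_iff_no_infinite_down_chain by auto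

lemma well_ordered_mono_subseq:
  fixes f :: "nat \<Rightarrow> 'a::linorder"
  assumes "well_ordered S" "range f \<subseteq> S"
  obtains h :: "nat \<Rightarrow> nat" where "strict_mono h" "mono (f \<circ> h)"
proof -
  obtain h where h: "strict_mono h" "monoseq (\<lambda>n. f (h n))"
    using seq_monosub[of f] by blast
  show ?thesis
  proof (cases "mono (f \<circ> h)")
    case True
    then show ?thesis by (rule that[OF h(1)])
  next
    case False
    then have anti: "antimono (f \<circ> h)"
      using h(2) by (simp add: monoseq_iff comp_def)
    have "range (f \<circ> h) \<subseteq> S" using assms(2) by auto
    then have "\<exists>m\<in>range (f \<circ> h). \<forall>x\<in>range (f \<circ> h). m \<le> x"
      by (rule well_ordered_has_min[OF assms(1)]) simp
    then obtain k where k: "\<And>n. f (h k) \<le> f (h n)" by auto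
    have const: "f (h (n + k)) = f (h k)" for n
      using antimonoD[OF anti, of k "n + k"] k[of "n + k"] by simp
    have "strict_mono (\<lambda>n. h (n + k))"
      using h(1) by (simp add: strict_mono_def)
    moreover have "mono (f \<circ> (\<lambda>n. h (n + k)))"
      by (intro monoI) (simp add: const)
    ultimately show ?thesis by (rule that)
  qed
qed

lemma well_ordered_good_pair:
  fixes a :: "nat \<Rightarrow> 'a::linorder" and b :: "nat \<Rightarrow> 'b::linorder"
  assumes "well_ordered A" "range a \<subseteq> A" "well_ordered B" "range b \<subseteq> B"
  obtains i j where "i < j" "a i \<le> a j" "b i \<le> b j"
proof -
  obtain h1 :: "nat \<Rightarrow> nat" where h1: "strict_mono h1" "mono (a \<circ> h1)"
    using well_ordered_mono_subseq[OF assms(1,2)] .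
  have "range (b \<circ> h1) \<subseteq> B" using assms(4) by auto
  then obtain h2 :: "nat \<Rightarrow> nat" where h2: "strict_mono h2" "mono (b \<circ> h1 \<circ> h2)"
    by (rule well_ordered_mono_subseq[OF assms(3)])
  have "h1 (h2 0) < h1 (h2 1)"
    using h1(1) h2(1) by (simp add: strict_monoD)
  moreover have "a (h1 (h2 0)) \<le> a (h1 (h2 1))"
    using monoD[OF h1(2), of "h2 0" "h2 1"] h2(1) by (simp add: strict_monoD less_imp_le)
  moreover have "b (h1 (h2 0)) \<le> b (h1 (h2 1))"
    using monoD[OF h2(2), of 0 1] by simp
  ultimately show ?thesis using that by blast
qed

locale strict_mono_comm_op =
  fixes V :: "'a::linorder set" and add :: "'a \<Rightarrow> 'a \<Rightarrow> 'a"
  assumes add_closed: "x \<in> V \<Longrightarrow> y \<in> V \<Longrightarrow> add x y \<in> V"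
    and add_commute: "x \<in> V \<Longrightarrow> y \<in> V \<Longrightarrow> add x y = add y x"
    and add_strict_mono_left: "x \<in> V \<Longrightarrow> y \<in> V \<Longrightarrow> z \<in> V \<Longrightarrow> x < y \<Longrightarrow> add x z < add y z"
begin

lemma add_mono_left: "x \<in> V \<Longrightarrow> y \<in> V \<Longrightarrow> z \<in> V \<Longrightarrow> x \<le> y \<Longrightarrow> add x z \<le> add y z"
  using add_strict_mono_left by (cases "x = y") (auto simp: order_le_less)

lemma add_mono:
  assumes "x \<in> V" "x' \<in> V" "y \<in> V" "y' \<in> V" "x \<le> x'" "y \<le> y'"
  shows "add x y \<le> add x' y'"
proof -
  have "add x y \<le> add x' y" using add_mono_left assms by blast
  also have "\<dots> = add y x'" using add_commute assms by blast
  also have "\<dots> \<le> add y' x'" using add_mono_left assms by blast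
  also have "\<dots> = add x' y'" using add_commute assms by blast
  finally show ?thesis .
qed

lemma add_strict_mono:
  assumes "x \<in> V" "x' \<in> V" "y \<in> V" "y' \<in> V" "x < x'" "y \<le> y'"
  shows "add x y < add x' y'"
proof -
  have "add x y < add x' y" using add_strict_mono_left assms by blast
  also have "\<dots> \<le> add x' y'" using add_mono assms by auto
  finally show ?thesis .
qed

lemma add_eq_add_imp_eq:
  assumes "x \<in> V" "x' \<in> V" "y \<in> V" "y' \<in> V" "x \<le> x'" "y \<le> y'" "add x y = add x' y'"
  shows "x = x' \<and> y = y'"
proof (rule ccontr)
  assume "\<not> (x = x' \<and> y = y')"
  then have "x < x' \<or> y < y'" using assms(5,6) by auto
  then have "add x y < add x' y'"
    using add_strict_mono[of x x' y y'] add_strict_mono[of y y' x x'] add_commute assms(1-6) by auto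
  then show False using assms(7) by simp
qed

definition sumset :: "'a set \<Rightarrow> 'a set \<Rightarrow> 'a set" where
  "sumset A B = {add a b | a b. a \<in> A \<and> b \<in> B}"

lemma sumsetI: "a \<in> A \<Longrightarrow> b \<in> B \<Longrightarrow> add a b = x \<Longrightarrow> x \<in> sumset A B"
  unfolding sumset_def by blast

lemma sumsetE: "x \<in> sumset A B \<Longrightarrow> (\<And>a b. a \<in> A \<Longrightarrow> b \<in> B \<Longrightarrow> x = add a b \<Longrightarrow> P) \<Longrightarrow> P"
  unfolding sumset_def by blast

lemma sumset_mono: "A \<subseteq> A' \<Longrightarrow> B \<subseteq> B' \<Longrightarrow> sumset A B \<subseteq> sumset A' B'"
  unfolding sumset_def by blast

lemma sumset_closed: "A \<subseteq> V \<Longrightarrow> B \<subseteq> V \<Longrightarrow> sumset A B \<subseteq> V"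
  unfolding sumset_def using add_closed by blast

lemma sumset_commute: "A \<subseteq> V \<Longrightarrow> B \<subseteq> V \<Longrightarrow> sumset A B = sumset B A"
  unfolding sumset_def using add_commute by blast

lemma well_ordered_sumset:
  assumes "A \<subseteq> V" "B \<subseteq> V" "well_ordered A" "well_ordered B"
  shows "well_ordered (sumset A B)"
  unfolding well_ordered_iff_no_descending_chain
proof
  assume "\<exists>f. \<forall>i. f i \<in> sumset A B \<and> f (Suc i) < f i"
  then obtain f where f: "\<And>i. f i \<in> sumset A B" "\<And>i. f (Suc i) < f i" by blast
  then have "\<forall>i. \<exists>a b. a \<in> A \<and> b \<in> B \<and> f i = add a b" unfolding sumset_def by blast
  then obtain a b where ab: "\<And>i. a i \<in> A" "\<And>i. b i \<in> B" "\<And>i. f i = add (a i) (b i)"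
    by metis
  obtain i j where ij: "i < j" "a i \<le> a j" "b i \<le> b j"
    using well_ordered_good_pair[OF assms(3) _ assms(4), of a b] ab(1,2) by blast
  have "f i \<le> f j"
    unfolding ab(3) using ij(2,3) ab(1,2) assms(1,2) by (intro add_mono) auto
  moreover have "f j \<le> f (Suc i)"
    using lift_Suc_antimono_le[of f, OF less_imp_le[OF f(2)]] ij(1) by simp
  ultimately show False using f(2)[of i] by simp
qed

lemma finite_sum_representations:
  assumes "A \<subseteq> V" "B \<subseteq> V" "well_ordered A" "well_ordered B"
  shows "finite {(a, b). a \<in> A \<and> b \<in> B \<and> add a b = c}"
proof (rule ccontr)
  let ?R = "{(a, b). a \<in> A \<and> b \<in> B \<and> add a b = c}"
  assume "infinite ?R"
  from infinite_countable_subset[OF this] obtain p :: "nat \<Rightarrow> 'a \<times> 'a"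
    where p: "inj p" "range p \<subseteq> ?R" by (elim exE conjE)
  have R: "fst (p n) \<in> A \<and> snd (p n) \<in> B \<and> add (fst (p n)) (snd (p n)) = c" for n
  proof -
    have "p n \<in> ?R" using p(2) by (rule subsetD) simp
    then show ?thesis by (cases "p n") simp
  qed
  obtain i j where ij: "i < j" "fst (p i) \<le> fst (p j)" "snd (p i) \<le> snd (p j)"
    using well_ordered_good_pair[OF assms(3) _ assms(4), of "fst \<circ> p" "snd \<circ> p"] R by auto
  have V: "fst (p i) \<in> V" "fst (p j) \<in> V" "snd (p i) \<in> V" "snd (p j) \<in> V"
    using R assms(1,2) by blast+
  have "fst (p i) = fst (p j) \<and> snd (p i) = snd (p j)"
    using add_eq_add_imp_eq[OF V ij(2,3)] R by simp
  then have "p i = p j" by (simp add: prod_eq_iff)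
  with p(1) ij(1) show False by (simp add: inj_eq)
qed

end

section \<open>Counting positive summands\<close>

interpretation real_add: strict_mono_comm_op "UNIV :: real set" "(+)"
  by unfold_locales auto

lemma sum_lists_Suc:
  "{sum_list ys | ys. length ys = Suc l \<and> set ys \<subseteq> A} =
   real_add.sumset A {sum_list ys | ys. length ys = l \<and> set ys \<subseteq> A}"
  unfolding real_add.sumset_def
proof (intro equalityI subsetI)
  fix s assume "s \<in> {sum_list ys | ys. length ys = Suc l \<and> set ys \<subseteq> A}"
  then obtain a ys where "s = a + sum_list ys" "a \<in> A" "length ys = l" "set ys \<subseteq> A"
    by (auto simp: length_Suc_conv)
  then show "s \<in> {a + b |a b. a \<in> A \<and> b \<in> {sum_list ys |ys. length ys = l \<and> set ys \<subseteq> A}}"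
    by blast
next
  fix s assume "s \<in> {a + b |a b. a \<in> A \<and> b \<in> {sum_list ys |ys. length ys = l \<and> set ys \<subseteq> A}}"
  then obtain a ys where "s = sum_list (a # ys)" "a \<in> A" "length ys = l" "set ys \<subseteq> A" by auto
  then show "s \<in> {sum_list ys | ys. length ys = Suc l \<and> set ys \<subseteq> A}"
    by (intro CollectI exI[of _ "a # ys"]) auto
qed

lemma well_ordered_sum_lists:
  fixes A :: "real set"
  assumes "well_ordered A"
  shows "well_ordered {sum_list ys | ys. length ys = l \<and> set ys \<subseteq> A}"
proof (induction l)
  case 0
  have "{sum_list ys | ys. length ys = 0 \<and> set ys \<subseteq> A} = {0}" by auto
  then show ?case by (simp add: finite_imp_well_ordered)
next
  case (Suc l)
  then show ?case
    unfolding sum_lists_Suc by (intro real_add.well_ordered_sumset assms) auto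
qed

lemma finite_sum_list_solutions:
  fixes A :: "real set"
  assumes "well_ordered A"
  shows "finite {ys. length ys = l \<and> set ys \<subseteq> A \<and> sum_list ys = c}"
proof (induction l arbitrary: c)
  case 0
  have "{ys. length ys = 0 \<and> set ys \<subseteq> A \<and> sum_list ys = c} \<subseteq> {[]}" by auto
  then show ?case by (rule finite_subset) simp
next
  case (Suc l)
  let ?T = "{sum_list ys | ys. length ys = l \<and> set ys \<subseteq> A}"
  let ?R = "{(a, t). a \<in> A \<and> t \<in> ?T \<and> a + t = c}"
  let ?sols = "\<lambda>t. {ys. length ys = l \<and> set ys \<subseteq> A \<and> sum_list ys = t}"
  have "finite ?R"
    by (rule real_add.finite_sum_representations) (auto simp: assms well_ordered_sum_lists)
  moreover have "{ys. length ys = Suc l \<and> set ys \<subseteq> A \<and> sum_list ys = c} \<subseteq>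
      (\<Union>(a, t)\<in>?R. (#) a ` ?sols t)"
    by (force simp: length_Suc_conv)
  ultimately show ?case
    using Suc.IH by (elim finite_subset) auto
qed

lemma finite_sum_list_entries:
  fixes A :: "real set"
  assumes "well_ordered A"
  shows "finite (\<Union>(set ` {ys. length ys \<le> l \<and> set ys \<subseteq> A \<and> sum_list ys = c}))"
proof -
  have "{ys. length ys \<le> l \<and> set ys \<subseteq> A \<and> sum_list ys = c} =
      (\<Union>k\<le>l. {ys. length ys = k \<and> set ys \<subseteq> A \<and> sum_list ys = c})" by auto
  then show ?thesis using finite_sum_list_solutions[OF assms] by simp
qed

lemma well_ordered_real_lower_bound:
  fixes A :: "real set"
  assumes "well_ordered A"
  shows "\<exists>L\<le>0. \<forall>a\<in>A. L \<le> a"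
proof (cases "A = {}")
  case False
  then obtain m where "\<forall>a\<in>A. m \<le> a" using well_ordered_has_min[OF assms order_refl] by blast
  then have "\<forall>a\<in>A. min m 0 \<le> a" by (auto intro: min.coboundedI1)
  then show ?thesis by (intro exI[of _ "min m 0"]) simp
qed (intro exI[of _ 0], simp)

lemma well_ordered_real_positive_gap:
  fixes B :: "real set"
  assumes "well_ordered B"
  shows "\<exists>\<alpha>>0. \<forall>b\<in>B. 0 < b \<longrightarrow> \<alpha> \<le> b"
proof (cases "{b\<in>B. 0 < b} = {}")
  case False
  have "{b\<in>B. 0 < b} \<subseteq> B" by blast
  from well_ordered_has_min[OF assms this False]
  obtain m where m: "m \<in> {b\<in>B. 0 < b}" "\<forall>b\<in>{b\<in>B. 0 < b}. m \<le> b" by blast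
  then show ?thesis by (intro exI[of _ m]) simp
next
  case True
  then show ?thesis by (intro exI[of _ 1]) auto
qed

lemma bounded_count_of_positive_summands:
  fixes A B :: "real set"
  assumes "well_ordered A" "well_ordered B"
  obtains K where "\<And>xs ys. length xs \<le> q \<Longrightarrow> set xs \<subseteq> A \<Longrightarrow> set ys \<subseteq> B \<Longrightarrow>
    \<forall>y\<in>set ys. 0 < y \<Longrightarrow> sum_list xs + sum_list ys = s \<Longrightarrow> length ys \<le> K"
proof -
  obtain L where L: "L \<le> 0" "\<forall>a\<in>A. L \<le> a"
    using well_ordered_real_lower_bound[OF assms(1)] by blast
  obtain \<alpha> where \<alpha>: "0 < \<alpha>" "\<forall>b\<in>B. 0 < b \<longrightarrow> \<alpha> \<le> b"
    using well_ordered_real_positive_gap[OF assms(2)] by blast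
  show ?thesis
  proof (rule that[of "nat \<lceil>(s - q * L) / \<alpha>\<rceil>"])
    fix xs ys assume xs: "length xs \<le> q" "set xs \<subseteq> A" and ys: "set ys \<subseteq> B" "\<forall>y\<in>set ys. 0 < y"
      and sum: "sum_list xs + sum_list ys = s"
    have "\<forall>x\<in>set xs. L \<le> x" "\<forall>y\<in>set ys. \<alpha> \<le> y" using L \<alpha> xs ys by auto
    have "real q * L \<le> length xs * L"
      using L(1) xs(1) by (simp add: mult_right_mono_neg)
    also have "\<dots> \<le> sum_list xs"
      using sum_list_mono[of xs "\<lambda>_. L" id] \<open>\<forall>x\<in>set xs. L \<le> x\<close> by (simp add: sum_list_triv)
    finally have "length ys * \<alpha> \<le> s - q * L"
      using sum_list_mono[of ys "\<lambda>_. \<alpha>" id] \<open>\<forall>y\<in>set ys. \<alpha> \<le> y\<close> sum by (simp add: sum_list_triv)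
    then have "length ys \<le> (s - q * L) / \<alpha>"
      using \<alpha>(1) by (simp add: field_simps)
    then show "length ys \<le> nat \<lceil>(s - q * L) / \<alpha>\<rceil>" by linarith
  qed
qed

lemma bounded_positive_summands_real:
  fixes A B :: "real set"
  assumes "well_ordered A" "well_ordered B"
  shows "\<exists>K H. finite H \<and> (\<forall>xs ys. length xs \<le> q \<longrightarrow> set xs \<subseteq> A \<longrightarrow> set ys \<subseteq> B \<longrightarrow>
    (\<forall>y\<in>set ys. 0 < y) \<longrightarrow> sum_list xs + sum_list ys = s \<longrightarrow> length ys \<le> K \<and> set (xs @ ys) \<subseteq> H)"
proof -
  obtain K where K: "\<And>xs ys. length xs \<le> q \<Longrightarrow> set xs \<subseteq> A \<Longrightarrow> set ys \<subseteq> B \<Longrightarrow>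
      \<forall>y\<in>set ys. 0 < y \<Longrightarrow> sum_list xs + sum_list ys = s \<Longrightarrow> length ys \<le> K"
    using bounded_count_of_positive_summands[OF assms] by blast
  define H where "H = \<Union>(set ` {zs. length zs \<le> q + K \<and> set zs \<subseteq> A \<union> B \<and> sum_list zs = s})"
  have "finite H"
    unfolding H_def by (intro finite_sum_list_entries well_ordered_Un assms)
  moreover have "length ys \<le> K \<and> set (xs @ ys) \<subseteq> H"
    if "length xs \<le> q" "set xs \<subseteq> A" "set ys \<subseteq> B" "\<forall>y\<in>set ys. 0 < y" "sum_list xs + sum_list ys = s"
    for xs ys
  proof -
    have "length ys \<le> K" using K that by blast
    then have "xs @ ys \<in> {zs. length zs \<le> q + K \<and> set zs \<subseteq> A \<union> B \<and> sum_list zs = s}"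
      using that by auto
    then show ?thesis unfolding H_def using \<open>length ys \<le> K\<close> by blast
  qed
  ultimately show ?thesis by blast
qed

definition vsum :: "nat \<Rightarrow> real list list \<Rightarrow> real list" where
  "vsum n xs = map (\<lambda>i. sum_list (map (\<lambda>x. x ! i) xs)) [0..<n]"

lemma vsum_Nil: "vsum n [] = replicate n 0"
  by (intro nth_equalityI) (auto simp: vsum_def)

lemma vsum_Cons: "length p = n \<Longrightarrow> vsum n (p # ps) = map2 (+) p (vsum n ps)"
  by (intro nth_equalityI) (auto simp: vsum_def)

lemma vsum_mset_cong: "mset xs = mset ys \<Longrightarrow> vsum n xs = vsum n ys"
  unfolding vsum_def by (metis mset_map sum_mset_sum_list)

lemma vsum_Suc:
  assumes "\<forall>x\<in>set xs. length x = Suc m"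
  shows "vsum (Suc m) xs = sum_list (map hd xs) # vsum m (map tl xs)"
proof -
  have "[0..<Suc m] = 0 # map Suc [0..<m]" by (simp add: map_Suc_upt upt_conv_Cons)
  then have "vsum (Suc m) xs = sum_list (map (\<lambda>x. x ! 0) xs)
      # map (\<lambda>i. sum_list (map (\<lambda>x. x ! Suc i) xs)) [0..<m]"
    by (simp add: vsum_def)
  moreover have "map (\<lambda>x. x ! 0) xs = map hd xs"
  proof (rule map_cong[OF refl])
    show "x ! 0 = hd x" if "x \<in> set xs" for x
      using assms that by (cases x) auto
  qed
  moreover have "map (\<lambda>i. sum_list (map (\<lambda>x. x ! Suc i) xs)) [0..<m] = vsum m (map tl xs)"
    unfolding vsum_def
  proof (rule map_cong[OF refl])
    fix i assume "i \<in> set [0..<m]"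
    then have "x ! Suc i = tl x ! i" if "x \<in> set xs" for x
      using assms that by (simp add: nth_tl)
    then show "sum_list (map (\<lambda>x. x ! Suc i) xs) = sum_list (map (\<lambda>x. x ! i) (map tl xs))"
      by (simp cong: map_cong)
  qed
  ultimately show ?thesis by simp
qed

lemma vsum_Suc_drop_zero_heads:
  assumes "\<forall>x\<in>set (xs @ ps). length x = Suc m" "\<forall>p\<in>set ps. \<not> Q p \<longrightarrow> hd p = 0"
  shows "vsum (Suc m) (xs @ ps) = sum_list (map hd (xs @ filter Q ps))
    # vsum m (map tl (xs @ filter Q ps) @ map tl (filter (\<lambda>p. \<not> Q p) ps))"
proof -
  have perm: "mset (xs @ ps) = mset (xs @ filter Q ps @ filter (\<lambda>p. \<not> Q p) ps)"
    by simp
  have "sum_list (map hd (filter (\<lambda>p. \<not> Q p) ps)) = 0"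
    using assms(2) by (induction ps) auto
  then show ?thesis
    using assms(1) vsum_mset_cong[OF perm, of "Suc m"]
      vsum_Suc[of "xs @ filter Q ps @ filter (\<lambda>p. \<not> Q p) ps"]
    by auto
qed

lemma hd_le_hd: "x \<noteq> [] \<Longrightarrow> y \<noteq> [] \<Longrightarrow> x \<le> y \<Longrightarrow> hd x \<le> hd (y :: 'a::linorder list)"
  by (cases x; cases y) auto

lemma tl_le_tl: "x \<noteq> [] \<Longrightarrow> y \<noteq> [] \<Longrightarrow> hd x = hd y \<Longrightarrow> x \<le> y \<Longrightarrow> tl x \<le> tl (y :: 'a::linorder list)"
  by (cases x; cases y) auto

lemma lex_positive_hd_tl:
  fixes p :: "'a::{linorder, zero} list"
  shows "replicate (Suc m) 0 < p \<Longrightarrow> length p = Suc m \<Longrightarrow> 0 \<le> hd p \<and> (hd p = 0 \<longrightarrow> replicate m 0 < tl p)"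
  by (cases p) auto

lemma well_ordered_tl_slices:
  fixes X :: "'a::linorder list set"
  assumes "well_ordered X" "\<forall>x\<in>X. x \<noteq> []" "finite H"
  shows "well_ordered (tl ` {x\<in>X. hd x \<in> H})"
proof -
  have "well_ordered (tl ` {x\<in>X. hd x = h})" for h
  proof (rule well_ordered_image_mono)
    show "well_ordered {x\<in>X. hd x = h}" by (rule well_ordered_subset[OF assms(1)]) auto
  qed (use assms(2) in \<open>auto intro!: tl_le_tl\<close>)
  moreover have "tl ` {x\<in>X. hd x \<in> H} = \<Union>((\<lambda>h. tl ` {x\<in>X. hd x = h}) ` H)" by blast
  ultimately show ?thesis using assms(3) by (auto intro: well_ordered_Union)
qed

text \<open>
  The summands from \<open>P\<close> with positive head are controlled by their heads alone, while
  those with head 0 have a positive tail. So the tails form a representation of \<open>tl c\<close>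
  of the same kind, with boundedly many additional summands in the role of \<open>S\<close>.
\<close>

lemma positive_summands_reduce_length:
  fixes S P :: "real list set"
  assumes S: "well_ordered S" "\<forall>x\<in>S. length x = Suc m"
    and P: "well_ordered P" "\<forall>p\<in>P. length p = Suc m \<and> replicate (Suc m) 0 < p"
  obtains K S' P' where "well_ordered S'" "\<forall>x\<in>S'. length x = m"
    and "well_ordered P'" "\<forall>p\<in>P'. length p = m \<and> replicate m 0 < p"
    and "\<And>xs ps. length xs \<le> q \<Longrightarrow> set xs \<subseteq> S \<Longrightarrow> set ps \<subseteq> P \<Longrightarrow> vsum (Suc m) (xs @ ps) = c \<Longrightarrow>
      \<exists>xs' ps'. length xs' \<le> q + K \<and> set xs' \<subseteq> S' \<and> set ps' \<subseteq> P'
        \<and> vsum m (xs' @ ps') = tl c \<and> length ps \<le> K + length ps'"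
proof -
  have P_heads: "0 \<le> hd p \<and> (hd p = 0 \<longrightarrow> replicate m 0 < tl p)" if "p \<in> P" for p
    using P(2) that lex_positive_hd_tl by blast
  have nonempty: "\<forall>x\<in>S \<union> P. x \<noteq> []" using S(2) P(2) by auto
  have wo_heads: "well_ordered (hd ` S)" "well_ordered (hd ` P)"
    using nonempty hd_le_hd by (auto intro!: well_ordered_image_mono S(1) P(1))
  obtain K H where "finite H" and KH: "\<forall>xs ys. length xs \<le> q \<longrightarrow> set xs \<subseteq> hd ` S \<longrightarrow>
      set ys \<subseteq> hd ` P \<longrightarrow> (\<forall>y\<in>set ys. 0 < y) \<longrightarrow> sum_list xs + sum_list ys = hd c \<longrightarrow>
      length ys \<le> K \<and> set (xs @ ys) \<subseteq> H"
    using bounded_positive_summands_real[OF wo_heads(1,2), of q "hd c"] by blast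
  show ?thesis
  proof (rule that)
    show "well_ordered (tl ` {x \<in> S \<union> P. hd x \<in> H})"
      using well_ordered_Un[OF S(1) P(1)] nonempty \<open>finite H\<close> by (rule well_ordered_tl_slices)
    show "well_ordered (tl ` {p \<in> P. hd p \<in> {0}})"
      using P(1) nonempty by (intro well_ordered_tl_slices) auto
    show "\<forall>x\<in>tl ` {x \<in> S \<union> P. hd x \<in> H}. length x = m"
      "\<forall>p\<in>tl ` {p \<in> P. hd p \<in> {0}}. length p = m \<and> replicate m 0 < p"
      using S(2) P(2) P_heads by auto
  next
    fix xs ps assume xs: "length xs \<le> q" "set xs \<subseteq> S" and ps: "set ps \<subseteq> P"
      and sum: "vsum (Suc m) (xs @ ps) = c"
    define ps0 where "ps0 = filter (\<lambda>p. 0 < hd p) ps"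
    define ps1 where "ps1 = filter (\<lambda>p. \<not> 0 < hd p) ps"
    have "\<forall>p\<in>set ps. \<not> 0 < hd p \<longrightarrow> hd p = 0"
      using ps P_heads by force
    then have c: "c = sum_list (map hd (xs @ ps0)) # vsum m (map tl (xs @ ps0) @ map tl ps1)"
      unfolding sum[symmetric] ps0_def ps1_def using xs ps S(2) P(2)
      by (intro vsum_Suc_drop_zero_heads) auto
    have "length (map hd ps0) \<le> K \<and> set (map hd xs @ map hd ps0) \<subseteq> H"
      using c xs ps by (intro KH[rule_format]) (auto simp: ps0_def)
    then have "set (xs @ ps0) \<subseteq> {x \<in> S \<union> P. hd x \<in> H}"
      using xs ps by (auto simp: ps0_def)
    moreover have "set ps1 \<subseteq> {p \<in> P. hd p \<in> {0}}"
      using ps P_heads by (force simp: ps1_def)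
    moreover have "length ps = length ps0 + length ps1"
      by (simp add: ps0_def ps1_def sum_length_filter_compl)
    ultimately show "\<exists>xs' ps'. length xs' \<le> q + K \<and> set xs' \<subseteq> tl ` {x \<in> S \<union> P. hd x \<in> H}
        \<and> set ps' \<subseteq> tl ` {p \<in> P. hd p \<in> {0}} \<and> vsum m (xs' @ ps') = tl c \<and> length ps \<le> K + length ps'"
      using c xs(1) \<open>length (map hd ps0) \<le> K \<and> _\<close>
      by (intro exI[of _ "map tl (xs @ ps0)"] exI[of _ "map tl ps1"]) auto
  qed
qed

lemma bounded_positive_summands:
  fixes S P :: "real list set"
  assumes "well_ordered S" "\<forall>x\<in>S. length x = n"
    and "well_ordered P" "\<forall>p\<in>P. length p = n \<and> replicate n 0 < p"
  shows "\<exists>B. \<forall>xs ps. length xs \<le> q \<longrightarrow> set xs \<subseteq> S \<longrightarrow> set ps \<subseteq> P \<longrightarrow>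
    vsum n (xs @ ps) = c \<longrightarrow> length ps \<le> B"
  using assms
proof (induction n arbitrary: S P q c)
  case 0
  then have "P = {}" by auto
  then show ?case by (intro exI[of _ 0]) simp
next
  case (Suc m)
  show ?case
  proof (rule positive_summands_reduce_length[OF Suc.prems, where q = q and c = c])
    fix S' P' K
    assume "well_ordered S'" "\<forall>x\<in>S'. length x = m"
      and "well_ordered P'" "\<forall>p\<in>P'. length p = m \<and> replicate m 0 < p"
      and reduce: "\<And>xs ps. length xs \<le> q \<Longrightarrow> set xs \<subseteq> S \<Longrightarrow> set ps \<subseteq> P \<Longrightarrow>
        vsum (Suc m) (xs @ ps) = c \<Longrightarrow> \<exists>xs' ps'. length xs' \<le> q + K \<and> set xs' \<subseteq> S'
          \<and> set ps' \<subseteq> P' \<and> vsum m (xs' @ ps') = tl c \<and> length ps \<le> K + length ps'"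
    then obtain B where B: "\<forall>xs ps. length xs \<le> q + K \<longrightarrow> set xs \<subseteq> S' \<longrightarrow> set ps \<subseteq> P' \<longrightarrow>
        vsum m (xs @ ps) = tl c \<longrightarrow> length ps \<le> B"
      using Suc.IH by blast
    show ?case
    proof (intro exI[of _ "K + B"] allI impI)
      fix xs ps assume "length xs \<le> q" "set xs \<subseteq> S" "set ps \<subseteq> P" "vsum (Suc m) (xs @ ps) = c"
      then obtain xs' ps' where "length xs' \<le> q + K" "set xs' \<subseteq> S'" "set ps' \<subseteq> P'"
        "vsum m (xs' @ ps') = tl c" "length ps \<le> K + length ps'"
        using reduce by blast
      then show "length ps \<le> K + B" using B[rule_format, of xs' ps'] by simp
    qed
  qed
qed

section \<open>Exponents\<close>

text \<open>Unlike \<open>expos r\<close>, the exponent of \<open>z\<close> may be negative here: derivatives lower it.\<close>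

definition full_expos :: "nat \<Rightarrow> expo set" where
  "full_expos r = {e. length (snd e) = r}"

definition expo_zero :: "nat \<Rightarrow> expo" where
  "expo_zero r = (0, replicate r 0)"

definition expo_vec :: "expo \<Rightarrow> real list" where
  "expo_vec e = fst e # map real_of_int (snd e)"

lemma map_of_int_less_iff: "map real_of_int ns < map real_of_int ms \<longleftrightarrow> ns < ms"
proof (induction ns arbitrary: ms)
  case Nil then show ?case by (cases ms) auto
next
  case (Cons a ns) then show ?case by (cases ms) auto
qed

lemma expo_vec_less_iff: "expo_vec x < expo_vec y \<longleftrightarrow> x < y"
  by (cases x; cases y) (auto simp: expo_vec_def map_of_int_less_iff)

lemma expo_vec_le_iff: "expo_vec x \<le> expo_vec y \<longleftrightarrow> x \<le> y"
proof -
  have "expo_vec x = expo_vec y \<longleftrightarrow> x = y"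
    by (cases x; cases y) (auto simp: expo_vec_def inj_on_def)
  then show ?thesis using expo_vec_less_iff by (metis order_le_less)
qed

lemma length_expo_vec [simp]: "length (expo_vec x) = Suc (length (snd x))"
  by (simp add: expo_vec_def)

lemma expo_vec_add: "expo_vec (expo_add x y) = map2 (+) (expo_vec x) (expo_vec y)"
proof -
  have "map real_of_int (map2 (+) ns ms) = map2 (+) (map real_of_int ns) (map real_of_int ms)"
    for ns ms :: "int list"
    by (intro nth_equalityI) auto
  then show ?thesis by (simp add: expo_vec_def expo_add_def)
qed

lemma expo_vec_zero: "expo_vec (expo_zero r) = replicate (Suc r) 0"
  by (simp add: expo_vec_def expo_zero_def)

lemma well_ordered_expo_vec: "well_ordered X \<Longrightarrow> well_ordered (expo_vec ` X)"
  by (rule well_ordered_image_mono) (auto simp: expo_vec_le_iff)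

lemma expo_add_commute: "expo_add x y = expo_add y x"
  unfolding expo_add_def by (auto intro!: nth_equalityI)

lemma expo_add_assoc: "expo_add (expo_add x y) z = expo_add x (expo_add y z)"
  unfolding expo_add_def by (auto intro!: nth_equalityI)

lemma expo_add_zero: "x \<in> full_expos r \<Longrightarrow> expo_add x (expo_zero r) = x"
  unfolding expo_add_def expo_zero_def full_expos_def by (auto intro!: nth_equalityI prod_eqI)

lemma expo_add_closed: "x \<in> full_expos r \<Longrightarrow> y \<in> full_expos r \<Longrightarrow> expo_add x y \<in> full_expos r"
  by (simp add: full_expos_def expo_add_def)

lemma expo_zero_in_full_expos: "expo_zero r \<in> full_expos r"
  by (simp add: full_expos_def expo_zero_def)

lemma expos_subset_full_expos: "expos r \<subseteq> full_expos r"
  by (auto simp: expos_def full_expos_def)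

lemma map2_plus_strict_mono_left:
  fixes x y z :: "'a::linordered_ab_group_add list"
  shows "length x = length y \<Longrightarrow> length y = length z \<Longrightarrow> x < y \<Longrightarrow> map2 (+) x z < map2 (+) y z"
proof (induction x arbitrary: y z)
  case (Cons a x)
  then obtain b y' c z' where "y = b # y'" "z = c # z'"
    by (metis length_Suc_conv)
  then show ?case using Cons by auto
qed simp

interpretation expo_add: strict_mono_comm_op "full_expos r" expo_add
proof unfold_locales
  fix x y z assume "x \<in> full_expos r" "y \<in> full_expos r" "z \<in> full_expos r" "x < y"
  then have "map2 (+) (expo_vec x) (expo_vec z) < map2 (+) (expo_vec y) (expo_vec z)"
    by (intro map2_plus_strict_mono_left) (auto simp: full_expos_def expo_vec_less_iff)
  then show "expo_add x z < expo_add y z"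
    by (simp add: expo_vec_add[symmetric] expo_vec_less_iff)
qed (auto simp: expo_add_closed expo_add_commute)

lemma expo_sumset_assoc:
  "expo_add.sumset (expo_add.sumset A B) C = expo_add.sumset A (expo_add.sumset B C)"
proof (intro equalityI subsetI)
  fix x assume "x \<in> expo_add.sumset (expo_add.sumset A B) C"
  then obtain a b c where "a \<in> A" "b \<in> B" "c \<in> C" "x = expo_add a (expo_add b c)"
    by (auto elim!: expo_add.sumsetE simp: expo_add_assoc)
  then show "x \<in> expo_add.sumset A (expo_add.sumset B C)"
    by (blast intro: expo_add.sumsetI)
next
  fix x assume "x \<in> expo_add.sumset A (expo_add.sumset B C)"
  then obtain a b c where "a \<in> A" "b \<in> B" "c \<in> C" "x = expo_add (expo_add a b) c"
    by (auto elim!: expo_add.sumsetE simp: expo_add_assoc)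
  then show "x \<in> expo_add.sumset (expo_add.sumset A B) C"
    by (blast intro: expo_add.sumsetI)
qed

primrec esum_power :: "nat \<Rightarrow> expo set \<Rightarrow> nat \<Rightarrow> expo set" where
  "esum_power r A 0 = {expo_zero r}"
| "esum_power r A (Suc k) = expo_add.sumset A (esum_power r A k)"

lemma esum_power_subset: "A \<subseteq> full_expos r \<Longrightarrow> esum_power r A k \<subseteq> full_expos r"
  by (induction k) (auto simp: expo_zero_in_full_expos dest: expo_add.sumset_closed[rotated])

lemma well_ordered_esum_power:
  "A \<subseteq> full_expos r \<Longrightarrow> well_ordered A \<Longrightarrow> well_ordered (esum_power r A k)"
proof (induction k)
  case (Suc k)
  then show ?case
    using expo_add.well_ordered_sumset[OF Suc.prems(1) esum_power_subset[OF Suc.prems(1)]] by simp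
qed (simp add: finite_imp_well_ordered)

lemma sumset_esum_power_subset:
  assumes "A \<subseteq> full_expos r" "B \<subseteq> full_expos r"
  shows "expo_add.sumset (esum_power r A k) (esum_power r B k) \<subseteq> esum_power r (expo_add.sumset A B) k"
proof (induction k)
  case 0
  then show ?case
    using expo_add_zero[OF expo_zero_in_full_expos] by (auto simp: expo_add.sumset_def)
next
  case (Suc k)
  let ?A = "esum_power r A k" and ?B = "esum_power r B k"
  have "expo_add.sumset (expo_add.sumset A ?A) (expo_add.sumset B ?B)
      = expo_add.sumset A (expo_add.sumset B (expo_add.sumset ?A ?B))"
    using assms esum_power_subset[OF assms(1)] esum_power_subset[OF assms(2)]
    by (simp add: expo_sumset_assoc expo_add.sumset_commute[of ?A r] expo_add.sumset_closed)
  also have "\<dots> \<subseteq> expo_add.sumset (expo_add.sumset A B) (esum_power r (expo_add.sumset A B) k)"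
    using Suc.IH by (simp add: expo_sumset_assoc expo_add.sumset_mono)
  finally show ?case by simp
qed

lemma esum_power_Suc_positive:
  assumes "P \<subseteq> full_expos r" "\<forall>p\<in>P. expo_zero r < p"
  shows "x \<in> esum_power r P (Suc k) \<Longrightarrow> expo_zero r < x"
proof (induction k arbitrary: x)
  case 0
  then obtain p where p: "p \<in> P" and x: "x = expo_add p (expo_zero r)"
    by (auto elim: expo_add.sumsetE)
  have "x = p" using x p assms(1) expo_add_zero by blast
  then show ?case using p assms(2) by simp
next
  case (Suc k)
  then obtain p y where p: "p \<in> P" and y: "y \<in> esum_power r P (Suc k)" and x: "x = expo_add p y"
    by (auto elim: expo_add.sumsetE)
  have "y \<in> full_expos r" using esum_power_subset[OF assms(1)] y by blast
  then have "expo_add (expo_zero r) (expo_zero r) < expo_add p y"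
    using assms p Suc.IH[OF y] expo_zero_in_full_expos
    by (intro expo_add.add_strict_mono) auto
  then show ?case
    using x expo_add_zero[OF expo_zero_in_full_expos] by simp
qed

lemma expo_vec_esum_power:
  assumes "P \<subseteq> full_expos r"
  shows "x \<in> esum_power r P k \<Longrightarrow>
    \<exists>ps. length ps = k \<and> set ps \<subseteq> expo_vec ` P \<and> expo_vec x = vsum (Suc r) ps"
proof (induction k arbitrary: x)
  case 0
  then show ?case by (auto simp: expo_vec_zero vsum_Nil)
next
  case (Suc k)
  then obtain p y where p: "p \<in> P" and y: "y \<in> esum_power r P k" and x: "x = expo_add p y"
    by (auto elim: expo_add.sumsetE)
  obtain ps where "length ps = k" "set ps \<subseteq> expo_vec ` P" "expo_vec y = vsum (Suc r) ps"
    using Suc.IH[OF y] by blast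
  moreover have "length (expo_vec p) = Suc r" using p assms by (auto simp: full_expos_def)
  ultimately show ?case
    using p x by (intro exI[of _ "expo_vec p # ps"]) (auto simp: expo_vec_add vsum_Cons)
qed

lemma eventually_notin_sumset_esum_power:
  assumes U: "well_ordered U" "U \<subseteq> full_expos r"
    and P: "P \<subseteq> full_expos r" "well_ordered P" "\<forall>p\<in>P. expo_zero r < p"
  shows "\<exists>N. \<forall>k\<ge>N. e \<notin> expo_add.sumset U (esum_power r P k)"
proof -
  have P_pos: "\<forall>p\<in>expo_vec ` P. length p = Suc r \<and> replicate (Suc r) 0 < p"
    using P(1,3) by (auto simp: full_expos_def expo_vec_less_iff[symmetric] expo_vec_zero)
  have U_len: "\<forall>x\<in>expo_vec ` U. length x = Suc r"
    using U(2) by (auto simp: full_expos_def)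
  obtain B where B: "\<forall>xs ps. length xs \<le> 1 \<longrightarrow> set xs \<subseteq> expo_vec ` U \<longrightarrow>
      set ps \<subseteq> expo_vec ` P \<longrightarrow> vsum (Suc r) (xs @ ps) = expo_vec e \<longrightarrow> length ps \<le> B"
    using bounded_positive_summands[OF well_ordered_expo_vec[OF U(1)] U_len
        well_ordered_expo_vec[OF P(2)] P_pos, of 1 "expo_vec e"]
    by blast
  have "k \<le> B" if "e \<in> expo_add.sumset U (esum_power r P k)" for k
  proof -
    from that obtain u x where u: "u \<in> U" and x: "x \<in> esum_power r P k" and e: "e = expo_add u x"
      by (auto elim: expo_add.sumsetE)
    obtain ps where ps: "length ps = k" "set ps \<subseteq> expo_vec ` P" "expo_vec x = vsum (Suc r) ps"
      using expo_vec_esum_power[OF P(1) x] by blast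
    have "vsum (Suc r) ([expo_vec u] @ ps) = expo_vec e"
      using u U(2) ps(3) by (auto simp: e expo_vec_add vsum_Cons full_expos_def)
    then show "k \<le> B" using B[rule_format, of "[expo_vec u]" ps] ps u by simp
  qed
  then show ?thesis by (intro exI[of _ "Suc B"]) (auto simp: not_less_eq_eq[symmetric])
qed

section \<open>Supports of products and derivatives\<close>

lemma supp_tmult: "supp (tmult f g) \<subseteq> expo_add.sumset (supp f) (supp g)"
proof
  fix e assume "e \<in> supp (tmult f g)"
  then have "tmult f g e \<noteq> 0" by (simp add: supp_def)
  then have "{(e1, e2). e1 \<in> supp f \<and> e2 \<in> supp g \<and> expo_add e1 e2 = e} \<noteq> {}"
    unfolding tmult_def by force
  then show "e \<in> expo_add.sumset (supp f) (supp g)"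
    unfolding expo_add.sumset_def by blast
qed

lemma tmult_eq_sum:
  assumes "supp f \<subseteq> X" "supp g \<subseteq> Y" "finite {(x, y). x \<in> X \<and> y \<in> Y \<and> expo_add x y = e}"
  shows "tmult f g e = (\<Sum>(x, y)\<in>{(x, y). x \<in> X \<and> y \<in> Y \<and> expo_add x y = e}. f x * g y)"
  unfolding tmult_def
  by (rule sum.mono_neutral_left[OF assms(3)]) (use assms(1,2) in \<open>auto simp: supp_def\<close>)

lemma supp_tpow: "supp f \<subseteq> D \<Longrightarrow> supp (tpow r f k) \<subseteq> esum_power r D k"
proof (induction k)
  case 0
  then show ?case by (auto simp: tpow_def supp_def tmonom_def expo_zero_def)
next
  case (Suc k)
  then show ?case
    using supp_tmult[of f "tpow r f k"] expo_add.sumset_mono[OF Suc.prems Suc.IH[OF Suc.prems]]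
    by (simp add: tpow_def)
qed

definition deriv_shifts :: "nat \<Rightarrow> expo set" where
  "deriv_shifts r = insert (-1, replicate r 0) ((\<lambda>j. (-1, ones_upto j r)) ` {..<r})"

lemma length_ones_upto [simp]: "length (ones_upto j n) = n"
  by (simp add: ones_upto_def)

lemma deriv_shifts_subset: "deriv_shifts r \<subseteq> full_expos r"
  by (auto simp: deriv_shifts_def full_expos_def)

lemma finite_deriv_shifts: "finite (deriv_shifts r)"
  by (simp add: deriv_shifts_def)

lemma supp_tderiv:
  assumes "supp g \<subseteq> full_expos r"
  shows "supp (tderiv g) \<subseteq> expo_add.sumset (supp g) (deriv_shifts r)"
proof
  fix e assume e: "e \<in> supp (tderiv g)"
  obtain b m where bm: "e = (b, m)" by (cases e)
  show "e \<in> expo_add.sumset (supp g) (deriv_shifts r)"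
  proof (cases "g (b + 1, m) = 0")
    case False
    then have "length m = r" using assms by (auto simp: supp_def full_expos_def)
    then have "expo_add (b + 1, m) (-1, replicate r 0) = e"
      by (auto simp: bm expo_add_def intro!: nth_equalityI)
    then show ?thesis
      using False by (intro expo_add.sumsetI) (auto simp: supp_def deriv_shifts_def)
  next
    case True
    then have "(\<Sum>j<length m. (of_int (m ! j) - 1) * g (b + 1, map2 (-) m (ones_upto j (length m)))) \<noteq> 0"
      using e by (simp add: bm supp_def tderiv_def)
    then obtain j where j: "j < length m" "g (b + 1, map2 (-) m (ones_upto j (length m))) \<noteq> 0"
      by (metis (no_types, lifting) lessThan_iff mult_zero_right sum.neutral)
    then have "length m = r" using assms by (auto simp: supp_def full_expos_def)
    then have "expo_add (b + 1, map2 (-) m (ones_upto j (length m))) (-1, ones_upto j r) = e"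
      by (auto simp: bm expo_add_def intro!: nth_equalityI)
    then show ?thesis
      using j \<open>length m = r\<close> by (intro expo_add.sumsetI) (auto simp: supp_def deriv_shifts_def)
  qed
qed

lemma supp_tderiv_pow:
  assumes "supp g \<subseteq> X" "X \<subseteq> full_expos r"
  shows "supp ((tderiv ^^ k) g) \<subseteq> expo_add.sumset X (esum_power r (deriv_shifts r) k)"
proof (induction k)
  case 0
  have "X \<subseteq> expo_add.sumset X {expo_zero r}"
  proof
    fix x assume "x \<in> X"
    moreover have "expo_add x (expo_zero r) = x"
      using \<open>x \<in> X\<close> assms(2) expo_add_zero by blast
    ultimately show "x \<in> expo_add.sumset X {expo_zero r}"
      by (intro expo_add.sumsetI) auto
  qed
  then show ?case using assms(1) by simp
next
  case (Suc k)
  let ?Z = "esum_power r (deriv_shifts r) k"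
  have Z: "?Z \<subseteq> full_expos r" by (rule esum_power_subset[OF deriv_shifts_subset])
  have "supp ((tderiv ^^ Suc k) g) \<subseteq> expo_add.sumset (supp ((tderiv ^^ k) g)) (deriv_shifts r)"
    using supp_tderiv Suc.IH expo_add.sumset_closed[OF assms(2) Z] by fastforce
  also have "\<dots> \<subseteq> expo_add.sumset (expo_add.sumset X ?Z) (deriv_shifts r)"
    using Suc.IH by (rule expo_add.sumset_mono) simp
  also have "\<dots> = expo_add.sumset X (esum_power r (deriv_shifts r) (Suc k))"
    using Z deriv_shifts_subset
    by (simp add: expo_sumset_assoc expo_add.sumset_commute[of ?Z])
  finally show ?case .
qed

definition tbasis :: "expo \<Rightarrow> tser" where
  "tbasis v = (\<lambda>e. if e = v then 1 else 0)"

definition tderiv_deps :: "expo \<Rightarrow> expo set" where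
  "tderiv_deps u = insert (fst u + 1, snd u)
     ((\<lambda>j. (fst u + 1, map2 (-) (snd u) (ones_upto j (length (snd u))))) ` {..<length (snd u)})"

primrec tderiv_pow_deps :: "nat \<Rightarrow> expo \<Rightarrow> expo set" where
  "tderiv_pow_deps 0 u = {u}"
| "tderiv_pow_deps (Suc k) u = (\<Union>v\<in>tderiv_deps u. tderiv_pow_deps k v)"

lemma finite_tderiv_pow_deps: "finite (tderiv_pow_deps k u)"
  by (induction k arbitrary: u) (simp_all add: tderiv_deps_def)

lemma tderiv_local: "(\<And>w. w \<in> tderiv_deps u \<Longrightarrow> g w = h w) \<Longrightarrow> tderiv g u = tderiv h u"
  by (cases u) (simp add: tderiv_def tderiv_deps_def)

lemma tderiv_pow_local:
  "(\<And>w. w \<in> tderiv_pow_deps k u \<Longrightarrow> g w = h w) \<Longrightarrow> (tderiv ^^ k) g u = (tderiv ^^ k) h u"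
proof (induction k arbitrary: u)
  case (Suc k)
  have "(tderiv ^^ k) g v = (tderiv ^^ k) h v" if "v \<in> tderiv_deps u" for v
    using Suc.prems that by (intro Suc.IH) auto
  then have "tderiv ((tderiv ^^ k) g) u = tderiv ((tderiv ^^ k) h) u" by (rule tderiv_local)
  then show ?case by simp
qed simp

lemma tderiv_sum: "tderiv (\<lambda>e. \<Sum>v\<in>F. c v * h v e) = (\<lambda>e. \<Sum>v\<in>F. c v * tderiv (h v) e)"
proof
  fix e :: expo
  obtain b m where e: "e = (b, m)" by (cases e)
  have "tderiv (\<lambda>e. \<Sum>v\<in>F. c v * h v e) (b, m) =
      (\<Sum>v\<in>F. (b + 1) * (c v * h v (b + 1, m))) +
      (\<Sum>j<length m. \<Sum>v\<in>F. (of_int (m ! j) - 1) * (c v * h v (b + 1, map2 (-) m (ones_upto j (length m)))))"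
    by (simp add: tderiv_def sum_distrib_left)
  also have "\<dots> = (\<Sum>v\<in>F. (b + 1) * (c v * h v (b + 1, m))) +
      (\<Sum>v\<in>F. \<Sum>j<length m. (of_int (m ! j) - 1) * (c v * h v (b + 1, map2 (-) m (ones_upto j (length m)))))"
    by (simp only: sum.swap[of _ "{..<length m}" F])
  also have "\<dots> = (\<Sum>v\<in>F. c v * tderiv (h v) (b, m))"
    by (simp add: tderiv_def sum.distrib sum_distrib_left algebra_simps)
  finally show "tderiv (\<lambda>e. \<Sum>v\<in>F. c v * h v e) e = (\<Sum>v\<in>F. c v * tderiv (h v) e)"
    by (simp add: e)
qed

lemma tderiv_pow_sum:
  "(tderiv ^^ k) (\<lambda>e. \<Sum>v\<in>F. c v * h v e) = (\<lambda>e. \<Sum>v\<in>F. c v * (tderiv ^^ k) (h v) e)"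
  by (induction k) (simp_all add: tderiv_sum)

lemma tderiv_pow_eq_sum:
  "(tderiv ^^ k) g u = (\<Sum>v\<in>tderiv_pow_deps k u. g v * (tderiv ^^ k) (tbasis v) u)"
proof -
  let ?h = "\<lambda>e. \<Sum>v\<in>tderiv_pow_deps k u. g v * tbasis v e"
  have "g w = ?h w" if "w \<in> tderiv_pow_deps k u" for w
    using that finite_tderiv_pow_deps[of k u] by (simp add: tbasis_def if_distrib cong: if_cong)
  then have "(tderiv ^^ k) g u = (tderiv ^^ k) ?h u" by (rule tderiv_pow_local)
  then show ?thesis by (simp add: tderiv_pow_sum)
qed

definition comp_eps :: "nat \<Rightarrow> tser \<Rightarrow> tser" where
  "comp_eps r \<phi> = (\<lambda>e. \<phi> e - tmonom r 1 e)"

lemma tcomp_eq_suminf: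
  "tcomp r g \<phi> e = (\<Sum>k. tmult ((tderiv ^^ k) g) (tpow r (comp_eps r \<phi>) k) e / fact k)"
  by (simp add: tcomp_def comp_eps_def Let_def)

lemma supp_comp_eps:
  assumes "\<phi> \<in> Lr0 r"
  shows "supp (comp_eps r \<phi>) \<subseteq> full_expos r" "well_ordered (supp (comp_eps r \<phi>))"
    and "\<forall>d\<in>supp (comp_eps r \<phi>). (1, replicate r 0) < d"
proof -
  have sub: "supp (comp_eps r \<phi>) \<subseteq> supp \<phi> - {(1, replicate r 0)}"
    using assms by (auto simp: supp_def comp_eps_def tmonom_def Lr0_def)
  moreover have "well_ordered (supp \<phi>)" "supp \<phi> \<subseteq> expos r"
    using assms by (auto simp: Lr0_def Lr_def)
  ultimately show "supp (comp_eps r \<phi>) \<subseteq> full_expos r" "well_ordered (supp (comp_eps r \<phi>))"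
    using expos_subset_full_expos well_ordered_subset by blast+
  show "\<forall>d\<in>supp (comp_eps r \<phi>). (1, replicate r 0) < d"
    using sub assms by (force simp: Lr0_def order_le_less)
qed

lemma replicate_zero_le_ones_upto: "replicate r 0 \<le> ones_upto j r"
proof (cases r)
  case (Suc r')
  have "[0..<Suc r'] = 0 # [1..<Suc r']" by (simp add: upt_conv_Cons)
  then show ?thesis using Suc by (simp add: ones_upto_def)
qed (simp add: ones_upto_def)

lemma expo_zero_less_shift_add:
  assumes "s \<in> deriv_shifts r" "d \<in> full_expos r" "(1, replicate r 0) < d"
  shows "expo_zero r < expo_add s d"
proof -
  have "(-1, replicate r 0) \<le> s"
    using assms(1) replicate_zero_le_ones_upto by (auto simp: deriv_shifts_def)
  moreover have "s \<in> full_expos r" using assms(1) deriv_shifts_subset by blast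
  ultimately have "expo_add (1, replicate r 0) (-1, replicate r 0) < expo_add d s"
    using assms(2,3) by (intro expo_add.add_strict_mono) (auto simp: full_expos_def)
  moreover have "expo_add (1, replicate r 0) (-1, replicate r 0) = expo_zero r"
    by (simp add: expo_add_def expo_zero_def)
  ultimately show ?thesis by (simp add: expo_add_commute)
qed

lemma taylor_step_expos:
  assumes "\<phi> \<in> Lr0 r"
  defines "P \<equiv> expo_add.sumset (deriv_shifts r) (supp (comp_eps r \<phi>))"
  shows "P \<subseteq> full_expos r" "well_ordered P" "\<forall>p\<in>P. expo_zero r < p"
proof -
  note eps = supp_comp_eps[OF assms(1)]
  show "P \<subseteq> full_expos r"
    unfolding P_def by (intro expo_add.sumset_closed deriv_shifts_subset eps(1))
  show "well_ordered P"
    unfolding P_def using finite_imp_well_ordered[OF finite_deriv_shifts]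
    by (rule expo_add.well_ordered_sumset[OF deriv_shifts_subset eps(1) _ eps(2)])
  show "\<forall>p\<in>P. expo_zero r < p"
  proof
    fix p assume "p \<in> P"
    then obtain s d where "s \<in> deriv_shifts r" "d \<in> supp (comp_eps r \<phi>)" "p = expo_add s d"
      unfolding P_def by (rule expo_add.sumsetE)
    then show "expo_zero r < p"
      using expo_zero_less_shift_add[of s r d] eps(1,3) by blast
  qed
qed

lemma tderiv_pow_tpow_triangular:
  assumes "\<phi> \<in> Lr0 r" "v \<in> full_expos r"
    and x: "(tderiv ^^ k) (tbasis v) x \<noteq> 0" and y: "tpow r (comp_eps r \<phi>) k y \<noteq> 0"
  shows "(k = 0 \<and> expo_add x y = v) \<or> (0 < k \<and> v < expo_add x y)"
proof (cases k)
  case 0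
  then show ?thesis
    using x y assms(2) expo_add_zero
    by (auto simp: tbasis_def tpow_def tmonom_def expo_zero_def split: if_splits)
next
  case (Suc k')
  let ?Z = "esum_power r (deriv_shifts r) k" and ?D = "supp (comp_eps r \<phi>)"
  note eps = supp_comp_eps[OF assms(1)]
  have "supp (tbasis v) \<subseteq> {v}" by (auto simp: supp_def tbasis_def)
  then have "x \<in> expo_add.sumset {v} ?Z"
    using supp_tderiv_pow[of "tbasis v" "{v}" r k] assms(2) x by (auto simp: supp_def)
  then obtain a where a: "a \<in> ?Z" "x = expo_add v a" by (auto elim: expo_add.sumsetE)
  have "y \<in> esum_power r ?D k" using supp_tpow[of _ ?D r k] y by (auto simp: supp_def)
  then have "expo_add a y \<in> esum_power r (expo_add.sumset (deriv_shifts r) ?D) k"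
    using sumset_esum_power_subset[OF deriv_shifts_subset eps(1)] a(1)
    by (auto intro: expo_add.sumsetI)
  then have "expo_zero r < expo_add a y"
    using esum_power_Suc_positive taylor_step_expos[OF assms(1)] Suc by blast
  moreover have "expo_add a y \<in> full_expos r"
    using \<open>expo_add a y \<in> _\<close> esum_power_subset taylor_step_expos(1)[OF assms(1)] by blast
  ultimately have "expo_add (expo_zero r) v < expo_add (expo_add a y) v"
    using assms(2) expo_zero_in_full_expos by (intro expo_add.add_strict_mono_left)
  then have "expo_add v (expo_zero r) < expo_add v (expo_add a y)"
    by (simp only: expo_add_commute[of v])
  moreover have "expo_add x y = expo_add v (expo_add a y)"
    using a(2) by (simp add: expo_add_assoc)
  ultimately show ?thesis
    using Suc expo_add_zero[OF assms(2)] by simp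
qed

section \<open>Unitriangular maps\<close>

definition unitriangular_on :: "expo set \<Rightarrow> (tser \<Rightarrow> tser) \<Rightarrow> bool" where
  "unitriangular_on U T \<longleftrightarrow> (\<forall>e. \<exists>F c. finite F \<and> F \<subseteq> {..e}
     \<and> (\<forall>h. supp h \<subseteq> U \<longrightarrow> T h e = (\<Sum>v\<in>F. c v * h v)) \<and> (e \<in> U \<longrightarrow> e \<in> F \<and> c e = 1))"

lemma unitriangular_coeff_of_index_sum:
  fixes I :: "'i set" and vv :: "'i \<Rightarrow> expo" and coef :: "'i \<Rightarrow> real"
  assumes "finite I" "\<And>h. supp h \<subseteq> U \<Longrightarrow> T h e = (\<Sum>i\<in>I. h (vv i) * coef i)"
    and "\<And>i. i \<in> I \<Longrightarrow> coef i \<noteq> 0 \<Longrightarrow> vv i \<in> U \<Longrightarrow> vv i \<le> e"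
    and "e \<in> U \<Longrightarrow> (\<Sum>i\<in>{i\<in>I. vv i = e}. coef i) = 1"
  shows "\<exists>F c. finite F \<and> F \<subseteq> {..e} \<and> (\<forall>h. supp h \<subseteq> U \<longrightarrow> T h e = (\<Sum>v\<in>F. c v * h v))
    \<and> (e \<in> U \<longrightarrow> e \<in> F \<and> c e = 1)"
proof -
  define c where "c v = (\<Sum>i\<in>{i\<in>I. vv i = v}. coef i)" for v
  define F where "F = {v \<in> vv ` I \<inter> U. c v \<noteq> 0}"
  have "finite F" using assms(1) by (simp add: F_def)
  moreover have "F \<subseteq> {..e}"
  proof
    fix v assume "v \<in> F"
    then obtain i where "i \<in> I" "vv i = v" "coef i \<noteq> 0" "v \<in> U"
      by (auto simp: F_def c_def dest: sum.not_neutral_contains_not_neutral)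
    then show "v \<in> {..e}" using assms(3) by auto
  qed
  moreover have "T h e = (\<Sum>v\<in>F. c v * h v)" if "supp h \<subseteq> U" for h
  proof -
    have "T h e = (\<Sum>v\<in>vv ` I. \<Sum>i\<in>{i\<in>I. vv i = v}. h (vv i) * coef i)"
      unfolding assms(2)[OF that] by (rule sum.image_gen[OF assms(1)])
    also have "\<dots> = (\<Sum>v\<in>vv ` I. c v * h v)"
      by (simp add: c_def sum_distrib_left mult.commute)
    also have "\<dots> = (\<Sum>v\<in>F. c v * h v)"
      using that assms(1) by (intro sum.mono_neutral_right) (auto simp: F_def supp_def)
    finally show ?thesis .
  qed
  moreover have "e \<in> F \<and> c e = 1" if "e \<in> U"
  proof -
    have "c e = 1" using assms(4)[OF that] by (simp add: c_def)
    moreover have "e \<in> vv ` I"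
    proof (rule ccontr)
      assume "e \<notin> vv ` I"
      then have "c e = 0"
        unfolding c_def by (intro sum.neutral) blast
      with \<open>c e = 1\<close> show False by simp
    qed
    ultimately show ?thesis using that by (simp add: F_def)
  qed
  ultimately show ?thesis by blast
qed

lemma weak_conv_unitriangular:
  assumes "unitriangular_on U T" "\<And>n. supp (g n) \<subseteq> U" "supp g0 \<subseteq> U" "weak_conv g g0"
  shows "weak_conv (\<lambda>n. T (g n)) (T g0)"
  unfolding weak_conv_def
proof
  fix e
  obtain F c where F: "\<forall>h. supp h \<subseteq> U \<longrightarrow> T h e = (\<Sum>v\<in>F. c v * h v)"
    using assms(1) unfolding unitriangular_on_def by blast
  have "(\<lambda>n. \<Sum>v\<in>F. c v * g n v) \<longlonglongrightarrow> (\<Sum>v\<in>F. c v * g0 v)"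
    using assms(4) unfolding weak_conv_def by (intro tendsto_intros) auto
  then show "(\<lambda>n. T (g n) e) \<longlonglongrightarrow> T g0 e" using F assms(2,3) by simp
qed

lemma weak_conv_of_unitriangular:
  assumes "well_ordered U" "unitriangular_on U T" "\<And>n. supp (g n) \<subseteq> U" "supp g0 \<subseteq> U"
    and conv: "weak_conv (\<lambda>n. T (g n)) (T g0)"
  shows "weak_conv g g0"
proof (rule ccontr)
  define A where "A = {e. \<not> (\<lambda>n. g n e) \<longlonglongrightarrow> g0 e}"
  assume "\<not> weak_conv g g0"
  then have "A \<noteq> {}" by (auto simp: A_def weak_conv_def)
  moreover have "A \<subseteq> U"
  proof
    fix e assume "e \<in> A"
    show "e \<in> U"
    proof (rule ccontr)
      assume "e \<notin> U"
      then have "g n e = 0" "g0 e = 0" for n using assms(3,4) by (auto simp: supp_def)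
      then show False using \<open>e \<in> A\<close> by (simp add: A_def)
    qed
  qed
  ultimately obtain m where m: "m \<in> A" "\<forall>x\<in>A. m \<le> x"
    using well_ordered_has_min[OF assms(1)] by blast
  with \<open>A \<subseteq> U\<close> have "m \<in> U" by blast
  then obtain F c where F: "finite F" "F \<subseteq> {..m}" "m \<in> F" "c m = 1"
    and T_sum: "\<forall>h. supp h \<subseteq> U \<longrightarrow> T h m = (\<Sum>v\<in>F. c v * h v)"
    using assms(2)[unfolded unitriangular_on_def, rule_format, of m] by blast
  have T: "T h m = h m + (\<Sum>v\<in>F - {m}. c v * h v)" if "supp h \<subseteq> U" for h
    using T_sum that sum.remove[OF F(1) F(3), of "\<lambda>v. c v * h v"] F(4) by simp
  have below: "(\<lambda>n. g n v) \<longlonglongrightarrow> g0 v" if "v \<in> F - {m}" for v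
  proof -
    have "v < m" using that F(2) by auto
    then have "v \<notin> A" using m(2) by (meson leD)
    then show ?thesis by (simp add: A_def)
  qed
  have "(\<lambda>n. T (g n) m - (\<Sum>v\<in>F - {m}. c v * g n v)) \<longlonglongrightarrow> T g0 m - (\<Sum>v\<in>F - {m}. c v * g0 v)"
    using conv below unfolding weak_conv_def
    by (intro tendsto_diff tendsto_sum tendsto_mult_left) blast+
  then have "(\<lambda>n. g n m) \<longlonglongrightarrow> g0 m"
    using T assms(3,4) by simp
  then show False using m(1) by (simp add: A_def)
qed

section \<open>Composition is unitriangular\<close>

locale taylor_coeff =
  fixes r :: nat and \<phi> :: tser and U :: "expo set" and e :: expo
  assumes phi: "\<phi> \<in> Lr0 r" and well_ordered_U: "well_ordered U" and U_full: "U \<subseteq> full_expos r"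
begin

definition pairs :: "nat \<Rightarrow> (expo \<times> expo) set" where
  "pairs k = {(x, y). x \<in> expo_add.sumset U (esum_power r (deriv_shifts r) k)
     \<and> y \<in> esum_power r (supp (comp_eps r \<phi>)) k \<and> expo_add x y = e}"

lemma finite_pairs: "finite (pairs k)"
proof -
  note eps = supp_comp_eps[OF phi]
  let ?Z = "esum_power r (deriv_shifts r) k" and ?D = "esum_power r (supp (comp_eps r \<phi>)) k"
  have Z: "?Z \<subseteq> full_expos r" "well_ordered ?Z"
    using esum_power_subset[OF deriv_shifts_subset]
      well_ordered_esum_power[OF deriv_shifts_subset finite_imp_well_ordered[OF finite_deriv_shifts]]
    by auto
  have D: "?D \<subseteq> full_expos r" "well_ordered ?D"
    using esum_power_subset[OF eps(1)] well_ordered_esum_power[OF eps(1,2)] by auto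
  have UZ: "expo_add.sumset U ?Z \<subseteq> full_expos r" "well_ordered (expo_add.sumset U ?Z)"
    using expo_add.sumset_closed[OF U_full Z(1)]
      expo_add.well_ordered_sumset[OF U_full Z(1) well_ordered_U Z(2)] by auto
  show ?thesis
    unfolding pairs_def by (rule expo_add.finite_sum_representations[OF UZ(1) D(1) UZ(2) D(2)])
qed

lemma pairs_eventually_empty: "\<exists>N. \<forall>k\<ge>N. pairs k = {}"
proof -
  let ?P = "expo_add.sumset (deriv_shifts r) (supp (comp_eps r \<phi>))"
  obtain N where N: "\<forall>k\<ge>N. e \<notin> expo_add.sumset U (esum_power r ?P k)"
    using eventually_notin_sumset_esum_power[OF well_ordered_U U_full taylor_step_expos[OF phi]]
    by blast
  have in_pairs: "e \<in> expo_add.sumset U (esum_power r ?P k)" if "(x, y) \<in> pairs k" for k x y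
  proof -
    from that obtain u a where u: "u \<in> U" and a: "a \<in> esum_power r (deriv_shifts r) k"
      and y: "y \<in> esum_power r (supp (comp_eps r \<phi>)) k" and e: "e = expo_add u (expo_add a y)"
      by (auto simp: pairs_def expo_add_assoc elim!: expo_add.sumsetE)
    have "expo_add a y \<in> esum_power r ?P k"
      using sumset_esum_power_subset[OF deriv_shifts_subset supp_comp_eps(1)[OF phi]] a y
      by (auto intro: expo_add.sumsetI)
    then show ?thesis using u e by (auto intro: expo_add.sumsetI)
  qed
  show ?thesis
  proof (intro exI[of _ N] allI impI equals0I)
    fix k xy assume "N \<le> k" "xy \<in> pairs k"
    then show False using in_pairs[of "fst xy" "snd xy" k] N by simp
  qed
qed

definition degree_bound :: nat where
  "degree_bound = (SOME N. \<forall>k\<ge>N. pairs k = {})"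

lemma pairs_empty: "degree_bound \<le> k \<Longrightarrow> pairs k = {}"
  using someI_ex[OF pairs_eventually_empty] unfolding degree_bound_def by blast

text \<open>
  An index \<open>(k, (x, y), v)\<close> records the Taylor order \<open>k\<close>, a splitting \<open>e = x + y\<close> between
  the exponents of \<open>g\<^sup>(\<^sup>k\<^sup>)\<close> and of \<open>\<epsilon>\<^sup>k\<close>, and an exponent \<open>v\<close> of \<open>g\<close> on which the coefficient
  of \<open>g\<^sup>(\<^sup>k\<^sup>)\<close> at \<open>x\<close> depends.
\<close>

definition index :: "(nat \<times> (expo \<times> expo) \<times> expo) set" where
  "index = (SIGMA k:{..<degree_bound}. SIGMA xy:pairs k. tderiv_pow_deps k (fst xy))"

definition coeff :: "nat \<times> (expo \<times> expo) \<times> expo \<Rightarrow> real" where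
  "coeff i = (case i of (k, (x, y), v) \<Rightarrow>
     (tderiv ^^ k) (tbasis v) x * tpow r (comp_eps r \<phi>) k y / fact k)"

lemma finite_index: "finite index"
  unfolding index_def by (intro finite_SigmaI finite_lessThan finite_pairs finite_tderiv_pow_deps)

lemma taylor_term_eq_sum:
  assumes "supp g \<subseteq> U"
  shows "tmult ((tderiv ^^ k) g) (tpow r (comp_eps r \<phi>) k) e / fact k =
    (\<Sum>xy\<in>pairs k. \<Sum>v\<in>tderiv_pow_deps k (fst xy). g v * coeff (k, xy, v))"
proof -
  have "tmult ((tderiv ^^ k) g) (tpow r (comp_eps r \<phi>) k) e =
      (\<Sum>(x, y)\<in>pairs k. (tderiv ^^ k) g x * tpow r (comp_eps r \<phi>) k y)"
    unfolding pairs_def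
    by (rule tmult_eq_sum[OF supp_tderiv_pow[OF assms U_full] supp_tpow])
      (use finite_pairs in \<open>simp_all add: pairs_def\<close>)
  then show ?thesis
    by (simp add: sum_divide_distrib sum_distrib_right case_prod_beta coeff_def
        tderiv_pow_eq_sum[of k g] mult.assoc)
qed

lemma tcomp_eq_index_sum:
  assumes "supp g \<subseteq> U"
  shows "tcomp r g \<phi> e = (\<Sum>i\<in>index. g (snd (snd i)) * coeff i)"
proof -
  have "tcomp r g \<phi> e = (\<Sum>k<degree_bound. tmult ((tderiv ^^ k) g) (tpow r (comp_eps r \<phi>) k) e / fact k)"
    unfolding tcomp_eq_suminf
    by (rule suminf_finite) (simp_all add: taylor_term_eq_sum[OF assms] pairs_empty)
  also have "\<dots> = (\<Sum>k<degree_bound. \<Sum>xy\<in>pairs k. \<Sum>v\<in>tderiv_pow_deps k (fst xy). g v * coeff (k, xy, v))"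
    by (simp add: taylor_term_eq_sum[OF assms])
  also have "\<dots> = (\<Sum>i\<in>index. g (snd (snd i)) * coeff i)"
    unfolding index_def
    by (simp add: sum.Sigma finite_pairs finite_tderiv_pow_deps split_beta)
  finally show ?thesis .
qed

lemma coeff_triangular:
  assumes "i \<in> index" "coeff i \<noteq> 0" "snd (snd i) \<in> U"
  shows "snd (snd i) \<le> e"
proof -
  obtain k x y v where i: "i = (k, (x, y), v)" by (cases i) auto
  have "expo_add x y = e" using assms(1) by (auto simp: i index_def pairs_def)
  moreover have "(tderiv ^^ k) (tbasis v) x \<noteq> 0" "tpow r (comp_eps r \<phi>) k y \<noteq> 0"
    using assms(2) by (auto simp: i coeff_def)
  moreover have "v \<in> full_expos r" using assms(3) U_full by (auto simp: i)
  ultimately show ?thesis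
    using tderiv_pow_tpow_triangular[OF phi] by (fastforce simp: i)
qed

lemma coeff_diagonal:
  assumes "e \<in> U"
  shows "(\<Sum>i\<in>{i\<in>index. snd (snd i) = e}. coeff i) = 1"
proof -
  let ?i0 = "(0, (e, expo_zero r), e)"
  have e_full: "e \<in> full_expos r" using assms U_full by blast
  have "(e, expo_zero r) \<in> pairs 0"
    using assms expo_add_zero[OF e_full] by (auto simp: pairs_def intro: expo_add.sumsetI)
  then have "0 < degree_bound" using pairs_empty[of 0] by (cases degree_bound) auto
  then have i0: "?i0 \<in> {i\<in>index. snd (snd i) = e}"
    using \<open>(e, expo_zero r) \<in> pairs 0\<close> by (simp add: index_def)
  have rest: "coeff i = 0" if "i \<in> {i\<in>index. snd (snd i) = e} - {?i0}" for i
  proof (rule ccontr)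
    assume nz: "coeff i \<noteq> 0"
    obtain k x y v where "i = (k, (x, y), v)" by (cases i) auto
    moreover have "v = e" using that calculation by simp
    ultimately have i: "i = (k, (x, y), e)" by simp
    have nz_x: "(tderiv ^^ k) (tbasis e) x \<noteq> 0" and nz_y: "tpow r (comp_eps r \<phi>) k y \<noteq> 0"
      using nz by (auto simp: i coeff_def)
    moreover have "expo_add x y = e" using that by (auto simp: i index_def pairs_def)
    ultimately have "k = 0"
      using tderiv_pow_tpow_triangular[OF phi e_full] by fastforce
    with nz_x nz_y have "x = e" "y = expo_zero r"
      by (auto simp: tbasis_def tpow_def tmonom_def expo_zero_def split: if_splits)
    then show False using that \<open>k = 0\<close> by (simp add: i)
  qed
  have "(\<Sum>i\<in>{i\<in>index. snd (snd i) = e}. coeff i)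
      = coeff ?i0 + (\<Sum>i\<in>{i\<in>index. snd (snd i) = e} - {?i0}. coeff i)"
    using finite_index i0 by (intro sum.remove) auto
  also have "(\<Sum>i\<in>{i\<in>index. snd (snd i) = e} - {?i0}. coeff i) = 0"
    using rest by (rule sum.neutral[OF ballI])
  also have "coeff ?i0 + 0 = 1"
    by (simp add: coeff_def tbasis_def tpow_def tmonom_def expo_zero_def)
  finally show ?thesis .
qed

end

lemma unitriangular_on_tcomp:
  assumes "\<phi> \<in> Lr0 r" "well_ordered U" "U \<subseteq> full_expos r"
  shows "unitriangular_on U (\<lambda>h. tcomp r h \<phi>)"
  unfolding unitriangular_on_def
proof
  fix e
  interpret taylor_coeff r \<phi> U e using assms by unfold_locales
  show "\<exists>F c. finite F \<and> F \<subseteq> {..e} \<and> (\<forall>h. supp h \<subseteq> U \<longrightarrow> tcomp r h \<phi> e = (\<Sum>v\<in>F. c v * h v))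
      \<and> (e \<in> U \<longrightarrow> e \<in> F \<and> c e = 1)"
    by (rule unitriangular_coeff_of_index_sum[where T = "\<lambda>h. tcomp r h \<phi>" and vv = "\<lambda>i. snd (snd i)",
          OF finite_index tcomp_eq_index_sum coeff_triangular coeff_diagonal])
qed

theorem lemma4p9:
  fixes r :: nat and g :: "nat \<Rightarrow> tser" and g0 \<phi> :: tser and W :: "expo set"
  assumes "well_ordered W" and "W \<subseteq> expos r"
    and "\<forall>w\<in>W. (0, replicate r 0) < w"
    and "\<forall>n. g n \<in> Lr r \<and> supp (g n) \<subseteq> W"
    and "g0 \<in> Lr r"
    and "\<phi> \<in> Lr0 r"
  shows "weak_conv g g0 \<longleftrightarrow> weak_conv (\<lambda>n. tcomp r (g n) \<phi>) (tcomp r g0 \<phi>)"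
proof -
  let ?U = "W \<union> supp g0"
  have U: "well_ordered ?U" "?U \<subseteq> full_expos r"
    using assms(1,2,5) expos_subset_full_expos by (auto simp: Lr_def well_ordered_Un)
  have T: "unitriangular_on ?U (\<lambda>h. tcomp r h \<phi>)"
    using assms(6) U by (rule unitriangular_on_tcomp)
  have supp: "\<And>n. supp (g n) \<subseteq> ?U" "supp g0 \<subseteq> ?U"
    using assms(4) by auto
  show ?thesis
    using weak_conv_unitriangular[where g = g, OF T supp]
      weak_conv_of_unitriangular[where g = g, OF U(1) T supp] by blast
qed

end
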